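(* Let $m,n\ge2$, let $\mathcal D$ be an $m\times n$ domino diagram, and consider the associated set of generalized domino states in $\mathbb C^m\otimes\mathbb C^n$ (with any choice of the nonzero constants $\alpha_r,\beta_c$). Suppose the graphs of these product states satisfy $G_A=\overline{G_B}$. If $\mathcal D$ contains a vertical domino of length at least $2$, then the states are not perfectly distinguishable by one-way LOCC with Alice measuring first; and if $\mathcal D$ contains a horizontal domino of length at least $2$, then they are not perfectly distinguishable by one-way LOCC with Bob measuring first.
   Context: An $m\times n$ chessboard has squares indexed by $\mathbb Z_m\times\mathbb Z_n$ and is regarded as a torus. A horizontal domino is a set of squares $(r,b+1),\dots,(r,b+s)$ (column indices mod $n$), a vertical domino is a set $(b+1,c),\dots,(b+s,c)$ (row indices mod $m$); $s$ is its length. An $m\times n$ domino diagram is a partition of the squares into dominoes. With $\{|0\rangle,\dots,|m-1\rangle\}$ and $\{|0\rangle,\dots,|n-1\rangle\}$ the standard bases of $\mathbb C^m$ (Alice) and $\mathbb C^n$ (Bob), fix a nonzero complex number $\alpha_r$ for each row $r$ and $\beta_c$ for each column $c$. The generalized domino states are obtained by assigning to each square a state: if square $(r,b+j)$, $1\le j\le s$, lies in a horizontal domino occupying $(r,b+1),\dots,(r,b+s)$, it is assigned $\sum_{k=1}^s\alpha_r^k\omega^{jk}|r\rangle\otimes|b+k\rangle$ with $\omega=e^{2\pi i/s}$; if square $(b+j,c)$ lies in a vertical domino occupying $(b+1,c),\dots,(b+s,c)$, it is assigned $\sum_{k=1}^s\beta_c^k\omega^{jk}|b+k\rangle\otimes|c\rangle$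 with $\omega=e^{2\pi i/s}$. For product states $|\psi_v^A\rangle\otimes|\psi_v^B\rangle$, $G_A$ is the graph on the index set with an edge $\{u,v\}$ ($u\ne v$) iff $\langle\psi_u^A|\psi_v^A\rangle\ne0$, $G_B$ likewise with Bob's vectors, and $\overline{G}$ is the complement. One-way LOCC with Alice first: there exist positive semidefinite $Q_1,\dots,Q_N$ on Alice's space with $\sum_jQ_j=I$ and, for each $j$, positive semidefinite $R^{(j)}_1,\dots$ on Bob's space summing to $I$ (one for each state) such that $\langle\psi_l|Q_j\otimes R^{(j)}_k|\psi_l\rangle=0$ for all $j$ and $k\ne l$; with Bob first, the same with the roles of the two factors exchanged. *)

theory Defs
  imports Complex_Main
begin

(* Dominoes on the m x n torus Z_m x Z_n (rows/columns represented by nats < m, < n).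
   Hor r b s : horizontal domino in row r occupying columns b+1,...,b+s (mod n)
   Ver c b s : vertical domino in column c occupying rows b+1,...,b+s (mod m) *)
datatype domino = Hor nat nat nat | Ver nat nat nat

definition board :: "nat \<Rightarrow> nat \<Rightarrow> (nat \<times> nat) set" where
  "board m n = {..<m} \<times> {..<n}"

fun dom_squares :: "nat \<Rightarrow> nat \<Rightarrow> domino \<Rightarrow> (nat \<times> nat) set" where
  "dom_squares m n (Hor r b s) = {(r, (b + j) mod n) | j. 1 \<le> j \<and> j \<le> s}"
| "dom_squares m n (Ver c b s) = {((b + j) mod m, c) | j. 1 \<le> j \<and> j \<le> s}"

fun valid_domino :: "nat \<Rightarrow> nat \<Rightarrow> domino \<Rightarrow> bool" where
  "valid_domino m n (Hor r b s) = (r < m \<and> b < n \<and> 1 \<le> s \<and> s \<le> n)"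
| "valid_domino m n (Ver c b s) = (c < n \<and> b < m \<and> 1 \<le> s \<and> s \<le> m)"

fun dom_len :: "domino \<Rightarrow> nat" where
  "dom_len (Hor r b s) = s"
| "dom_len (Ver c b s) = s"

fun is_horizontal :: "domino \<Rightarrow> bool" where
  "is_horizontal (Hor r b s) = True"
| "is_horizontal (Ver c b s) = False"

fun is_vertical :: "domino \<Rightarrow> bool" where
  "is_vertical (Hor r b s) = False"
| "is_vertical (Ver c b s) = True"

definition domino_diagram :: "nat \<Rightarrow> nat \<Rightarrow> domino set \<Rightarrow> bool" where
  "domino_diagram m n D \<longleftrightarrow>
     (\<forall>d\<in>D. valid_domino m n d) \<and>
     (\<forall>sq\<in>board m n. \<exists>!d. d \<in> D \<and> sq \<in> dom_squares m n d)"

definition dom_of :: "nat \<Rightarrow> nat \<Rightarrow> domino set \<Rightarrow> nat \<times> nat \<Rightarrow> domino" where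
  "dom_of m n D sq = (THE d. d \<in> D \<and> sq \<in> dom_squares m n d)"

fun dom_pos :: "nat \<Rightarrow> nat \<Rightarrow> domino \<Rightarrow> nat \<times> nat \<Rightarrow> nat" where
  "dom_pos m n (Hor r b s) sq = (THE j. 1 \<le> j \<and> j \<le> s \<and> (b + j) mod n = snd sq)"
| "dom_pos m n (Ver c b s) sq = (THE j. 1 \<le> j \<and> j \<le> s \<and> (b + j) mod m = fst sq)"

definition ket :: "nat \<Rightarrow> nat \<Rightarrow> complex" where
  "ket i = (\<lambda>p. if p = i then 1 else 0)"

definition root_unity :: "nat \<Rightarrow> complex" where
  "root_unity s = exp (2 * of_real pi * \<i> / of_nat s)"

definition alice_vec :: "nat \<Rightarrow> nat \<Rightarrow> domino set \<Rightarrow> (nat \<Rightarrow> complex) \<Rightarrow> (nat \<Rightarrow> complex)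
    \<Rightarrow> nat \<times> nat \<Rightarrow> nat \<Rightarrow> complex" where
  "alice_vec m n D \<alpha> \<beta> sq =
     (let d = dom_of m n D sq; j = dom_pos m n d sq in
      case d of
        Hor r b s \<Rightarrow> ket r
      | Ver c b s \<Rightarrow> (\<lambda>p. \<Sum>k\<in>{1..s}. if p = (b + k) mod m
                            then \<beta> c ^ k * root_unity s ^ (j * k) else 0))"

definition bob_vec :: "nat \<Rightarrow> nat \<Rightarrow> domino set \<Rightarrow> (nat \<Rightarrow> complex) \<Rightarrow> (nat \<Rightarrow> complex)
    \<Rightarrow> nat \<times> nat \<Rightarrow> nat \<Rightarrow> complex" where
  "bob_vec m n D \<alpha> \<beta> sq =
     (let d = dom_of m n D sq; j = dom_pos m n d sq in
      case d of
        Hor r b s \<Rightarrow> (\<lambda>p. \<Sum>k\<in>{1..s}. if p = (b + k) mod n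
                            then \<alpha> r ^ k * root_unity s ^ (j * k) else 0)
      | Ver c b s \<Rightarrow> ket c)"

definition prod_state :: "(nat \<Rightarrow> complex) \<Rightarrow> (nat \<Rightarrow> complex) \<Rightarrow> nat \<times> nat \<Rightarrow> complex" where
  "prod_state a b = (\<lambda>(i, i'). a i * b i')"

definition cinner :: "nat \<Rightarrow> (nat \<Rightarrow> complex) \<Rightarrow> (nat \<Rightarrow> complex) \<Rightarrow> complex" where
  "cinner d u v = (\<Sum>i<d. cnj (u i) * v i)"

definition psd :: "nat \<Rightarrow> (nat \<Rightarrow> nat \<Rightarrow> complex) \<Rightarrow> bool" where
  "psd d Q \<longleftrightarrow> (\<forall>v :: nat \<Rightarrow> complex.
      Im (\<Sum>i<d. \<Sum>j<d. cnj (v i) * Q i j * v j) = 0 \<and>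
      Re (\<Sum>i<d. \<Sum>j<d. cnj (v i) * Q i j * v j) \<ge> 0)"

definition is_identity :: "nat \<Rightarrow> (nat \<Rightarrow> nat \<Rightarrow> complex) \<Rightarrow> bool" where
  "is_identity d M \<longleftrightarrow> (\<forall>i<d. \<forall>j<d. M i j = (if i = j then 1 else 0))"

definition expect_tensor :: "nat \<Rightarrow> nat \<Rightarrow> (nat \<Rightarrow> nat \<Rightarrow> complex) \<Rightarrow> (nat \<Rightarrow> nat \<Rightarrow> complex)
    \<Rightarrow> (nat \<times> nat \<Rightarrow> complex) \<Rightarrow> complex" where
  "expect_tensor dA dB Q R \<psi> =
     (\<Sum>i<dA. \<Sum>i'<dB. \<Sum>p<dA. \<Sum>p'<dB.
        cnj (\<psi> (i, i')) * (Q i p * R i' p') * \<psi> (p, p'))"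

definition one_way_LOCC_Alice_first :: "nat \<Rightarrow> nat \<Rightarrow> 'i set \<Rightarrow> ('i \<Rightarrow> nat \<times> nat \<Rightarrow> complex) \<Rightarrow> bool" where
  "one_way_LOCC_Alice_first dA dB S \<psi> \<longleftrightarrow>
     (\<exists>(N::nat) (Q :: nat \<Rightarrow> nat \<Rightarrow> nat \<Rightarrow> complex) (R :: nat \<Rightarrow> 'i \<Rightarrow> nat \<Rightarrow> nat \<Rightarrow> complex).
        (\<forall>t<N. psd dA (Q t)) \<and>
        is_identity dA (\<lambda>i j. \<Sum>t<N. Q t i j) \<and>
        (\<forall>t<N. (\<forall>k\<in>S. psd dB (R t k)) \<and> is_identity dB (\<lambda>i j. \<Sum>k\<in>S. R t k i j)) \<and>
        (\<forall>t<N. \<forall>k\<in>S. \<forall>l\<in>S. k \<noteq> l \<longrightarrow> expect_tensor dA dB (Q t) (R t k) (\<psi> l) = 0))"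

definition one_way_LOCC_Bob_first :: "nat \<Rightarrow> nat \<Rightarrow> 'i set \<Rightarrow> ('i \<Rightarrow> nat \<times> nat \<Rightarrow> complex) \<Rightarrow> bool" where
  "one_way_LOCC_Bob_first dA dB S \<psi> \<longleftrightarrow>
     (\<exists>(N::nat) (Q :: nat \<Rightarrow> nat \<Rightarrow> nat \<Rightarrow> complex) (R :: nat \<Rightarrow> 'i \<Rightarrow> nat \<Rightarrow> nat \<Rightarrow> complex).
        (\<forall>t<N. psd dB (Q t)) \<and>
        is_identity dB (\<lambda>i j. \<Sum>t<N. Q t i j) \<and>
        (\<forall>t<N. (\<forall>k\<in>S. psd dA (R t k)) \<and> is_identity dA (\<lambda>i j. \<Sum>k\<in>S. R t k i j)) \<and>
        (\<forall>t<N. \<forall>k\<in>S. \<forall>l\<in>S. k \<noteq> l \<longrightarrow> expect_tensor dA dB (R t k) (Q t) (\<psi> l) = 0))"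

definition ortho_graph :: "nat \<Rightarrow> 'i set \<Rightarrow> ('i \<Rightarrow> nat \<Rightarrow> complex) \<Rightarrow> 'i set set" where
  "ortho_graph d S v = {{u, w} | u w. u \<in> S \<and> w \<in> S \<and> u \<noteq> w \<and> cinner d (v u) (v w) \<noteq> 0}"

definition complement_graph :: "'i set \<Rightarrow> 'i set set \<Rightarrow> 'i set set" where
  "complement_graph S E = {{u, w} | u w. u \<in> S \<and> w \<in> S \<and> u \<noteq> w} - E"

end

theory Submission
  imports Defs "HOL-Analysis.Complex_Transcendental"
begin

text \<open>Suppose Alice measures first. Some outcome \<open>Q\<close> of her measurement does not annihilate
  the Fourier state \<open>\<psi>\<close> on a square of a vertical domino in column \<open>c\<close>. Every state of
  column \<open>c\<close> has a Bob factor that is not orthogonal to \<open>|c\<rangle>\<close>, so after outcome \<open>Q\<close> Bob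
  could not tell such a state from \<open>\<psi>\<close> if \<open>Q\<close> let it through: \<open>Q\<close> annihilates the Alice
  factors of all other states of column \<open>c\<close>. These factors are orthogonal to \<open>\<psi>\<close>, since
  \<open>G\<^sub>A\<close> is the complement of \<open>G\<^sub>B\<close>, and together with \<open>\<psi>\<close> they span \<open>\<complex>\<^sup>m\<close>; hence \<open>Q\<close>
  detects every state whose Alice factor is not orthogonal to \<open>\<psi>\<close>. Two such states lie in
  the neighbouring column, in two rows where \<open>\<psi>\<close> does not vanish, and their Bob factors are
  not orthogonal, so Bob cannot distinguish them. A horizontal domino with Bob measuring
  first is the transposed situation.\<close>

definition sesq_form ::
    "nat \<Rightarrow> (nat \<Rightarrow> nat \<Rightarrow> complex) \<Rightarrow> (nat \<Rightarrow> complex) \<Rightarrow> (nat \<Rightarrow> complex) \<Rightarrow> complex" where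
  "sesq_form d M w v = (\<Sum>i<d. \<Sum>j<d. cnj (w i) * M i j * v j)"

lemma sesq_form_add_scaled:
  "sesq_form d M (\<lambda>i. v i + z * w i) (\<lambda>i. v i + z * w i) =
     sesq_form d M v v + z * sesq_form d M v w + cnj z * sesq_form d M w v
     + (cnj z * z) * sesq_form d M w w"
proof -
  have "cnj (v i + z * w i) * M i j * (v j + z * w j) =
      cnj (v i) * M i j * v j + z * (cnj (v i) * M i j * w j)
      + cnj z * (cnj (w i) * M i j * v j) + (cnj z * z) * (cnj (w i) * M i j * w j)" for i j
    by (simp add: algebra_simps)
  then show ?thesis by (simp add: sesq_form_def sum.distrib sum_distrib_left)
qed

lemma linear_plus_square_nonneg_imp_zero:
  fixes x c :: real
  assumes "\<And>t. 0 \<le> t * x + t\<^sup>2 * c"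
  shows "x = 0"
proof (rule ccontr)
  assume "x \<noteq> 0"
  define e where "e = \<bar>c\<bar> + 1"
  have e: "e > 0" "\<bar>c\<bar> = e - 1" unfolding e_def by auto
  define t where "t = - x / e"
  have "t\<^sup>2 * c \<le> t\<^sup>2 * \<bar>c\<bar>" by (simp add: mult_left_mono)
  moreover have "t * x + t\<^sup>2 * (e - 1) = - (x\<^sup>2 / e\<^sup>2)"
    unfolding t_def using e by (simp add: field_simps power2_eq_square)
  moreover have "x\<^sup>2 / e\<^sup>2 > 0" using \<open>x \<noteq> 0\<close> e by simp
  ultimately show False using assms[of t] e by auto
qed

lemma psd_sesq_form_eq_0:
  assumes "psd d M" "sesq_form d M v v = 0"
  shows "sesq_form d M v w = 0 \<and> sesq_form d M w v = 0"
proof -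
  define A B C where "A = sesq_form d M v w" and "B = sesq_form d M w v" and "C = sesq_form d M w w"
  have nonneg: "Im (z * A + cnj z * B + (cnj z * z) * C) = 0 \<and> 0 \<le> Re (z * A + cnj z * B + (cnj z * z) * C)"
    for z
  proof -
    have "sesq_form d M (\<lambda>i. v i + z * w i) (\<lambda>i. v i + z * w i) = z * A + cnj z * B + (cnj z * z) * C"
      using assms(2) by (simp add: sesq_form_add_scaled A_def B_def C_def)
    moreover have "Im (sesq_form d M u u) = 0 \<and> 0 \<le> Re (sesq_form d M u u)" for u
      using assms(1) unfolding psd_def sesq_form_def by blast
    ultimately show ?thesis by metis
  qed
  \<comment> \<open>positivity at \<open>v + z w\<close> for real and for imaginary \<open>z\<close>\<close>
  have "Re A + Re B = 0"
    by (rule linear_plus_square_nonneg_imp_zero[where c = "Re C"])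
       (use nonneg[of "of_real t" for t] in \<open>simp add: power2_eq_square algebra_simps\<close>)
  moreover have "Im A + Im B = 0"
    by (rule linear_plus_square_nonneg_imp_zero[where c = "Im C"])
       (use nonneg[of "of_real t" for t] in \<open>simp add: power2_eq_square algebra_simps\<close>)
  moreover have "Im B - Im A = 0"
    by (rule linear_plus_square_nonneg_imp_zero[where c = "Re C"])
       (use nonneg[of "\<i> * of_real t" for t] in \<open>simp add: power2_eq_square algebra_simps\<close>)
  moreover have "Re A - Re B = 0"
    by (rule linear_plus_square_nonneg_imp_zero[where c = "Im C"])
       (use nonneg[of "\<i> * of_real t" for t] in \<open>simp add: power2_eq_square algebra_simps\<close>)
  ultimately have "A = 0" "B = 0" by (auto intro: complex_eqI)
  then show ?thesis by (simp add: A_def B_def)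
qed

lemma expect_tensor_prod_state:
  "expect_tensor dA dB Q R (prod_state a b) = sesq_form dA Q a a * sesq_form dB R b b"
proof -
  have "expect_tensor dA dB Q R (prod_state a b) =
      (\<Sum>i<dA. \<Sum>i'<dB. \<Sum>p<dA. \<Sum>p'<dB. (cnj (a i) * Q i p * a p) * (cnj (b i') * R i' p' * b p'))"
    unfolding expect_tensor_def prod_state_def by (simp add: algebra_simps)
  also have "\<dots> = (\<Sum>i<dA. \<Sum>p<dA. \<Sum>i'<dB. \<Sum>p'<dB. (cnj (a i) * Q i p * a p) * (cnj (b i') * R i' p' * b p'))"
    by (rule sum.cong[OF refl], rule sum.swap)
  also have "\<dots> = sesq_form dA Q a a * sesq_form dB R b b"
    unfolding sesq_form_def by (simp only: sum_distrib_right) (simp only: sum_distrib_left)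
  finally show ?thesis .
qed

lemma sesq_form_ket_left:
  assumes "i < d"
  shows "sesq_form d M (ket i) v = (\<Sum>j<d. M i j * v j)"
proof -
  have "(\<Sum>j<d. cnj (ket i i') * M i' j * v j) = (if i' = i then (\<Sum>j<d. M i j * v j) else 0)" for i'
    by (simp add: ket_def)
  then show ?thesis using assms by (simp add: sesq_form_def)
qed

lemma sum_sesq_form_identity:
  assumes "is_identity d (\<lambda>i j. \<Sum>k\<in>K. M k i j)"
  shows "(\<Sum>k\<in>K. sesq_form d (M k) w v) = cinner d w v"
proof -
  have "(\<Sum>k\<in>K. sesq_form d (M k) w v) = (\<Sum>i<d. \<Sum>j<d. cnj (w i) * (\<Sum>k\<in>K. M k i j) * v j)"
    unfolding sesq_form_def by (simp add: sum_distrib_left sum_distrib_right sum.swap[of _ K])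
  also have "\<dots> = (\<Sum>i<d. \<Sum>j<d. if j = i then cnj (w i) * v i else 0)"
    using assms unfolding is_identity_def by (intro sum.cong refl) auto
  finally show ?thesis by (simp add: cinner_def)
qed

lemma cinner_commute: "cinner d w v = cnj (cinner d v w)"
  by (simp add: cinner_def mult.commute)

lemma cinner_ket_left:
  assumes "c < d"
  shows "cinner d (ket c) v = v c"
proof -
  have "cnj (ket c i) * v i = (if i = c then v c else 0)" for i
    by (simp add: ket_def)
  then show ?thesis using assms by (simp add: cinner_def)
qed

lemma cinner_ket_right: "c < d \<Longrightarrow> cinner d v (ket c) = cnj (v c)"
  by (simp add: cinner_commute[of d v] cinner_ket_left)

lemma cinner_self_neq_0:
  assumes "i < d" "v i \<noteq> 0"
  shows "cinner d v v \<noteq> 0"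
proof -
  have "cinner d v v = of_real (\<Sum>i<d. (cmod (v i))\<^sup>2)"
    unfolding cinner_def of_real_sum by (intro sum.cong refl) (metis complex_norm_square mult.commute)
  moreover have "(\<Sum>i<d. (cmod (v i))\<^sup>2) > 0"
    by (rule sum_pos2[of "{..<d}" i]) (use assms in auto)
  ultimately show ?thesis by (metis less_irrefl of_real_eq_0_iff)
qed

definition in_span ::
    "nat \<Rightarrow> 'i set \<Rightarrow> ('i \<Rightarrow> nat \<Rightarrow> complex) \<Rightarrow> (nat \<Rightarrow> complex) \<Rightarrow> bool" where
  "in_span d I a x \<longleftrightarrow> (\<exists>\<mu>. \<forall>p<d. x p = (\<Sum>i\<in>I. \<mu> i * a i p))"

lemma in_span_member:
  assumes "finite I" "i \<in> I" "a i = x"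
  shows "in_span d I a x"
proof -
  have "x p = (\<Sum>i'\<in>I. (if i' = i then 1 else 0) * a i' p)" for p
  proof -
    have "(\<Sum>i'\<in>I. (if i' = i then 1 else 0) * a i' p) = (\<Sum>i'\<in>I. if i' = i then a i p else 0)"
      by (rule sum.cong) auto
    then show ?thesis using assms by simp
  qed
  then show ?thesis unfolding in_span_def by (intro exI[of _ "\<lambda>i'. if i' = i then 1 else 0"]) blast
qed

lemma in_span_mono:
  assumes "finite J" "I \<subseteq> J" "in_span d I a x"
  shows "in_span d J a x"
proof -
  obtain \<mu> where \<mu>: "\<forall>p<d. x p = (\<Sum>i\<in>I. \<mu> i * a i p)"
    using assms(3) by (auto simp: in_span_def)
  have "(\<Sum>i\<in>I. \<mu> i * a i p) = (\<Sum>i\<in>J. (if i \<in> I then \<mu> i else 0) * a i p)" for p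
    by (rule sum.mono_neutral_cong_left) (use assms(1,2) in auto)
  then show ?thesis
    using \<mu> unfolding in_span_def by (intro exI[of _ "\<lambda>i. if i \<in> I then \<mu> i else 0"]) auto
qed

lemma in_span_image:
  assumes "inj_on h I" "\<And>i. i \<in> I \<Longrightarrow> a (h i) = v i" "in_span d I v x"
  shows "in_span d (h ` I) a x"
proof -
  obtain \<mu> where \<mu>: "\<forall>p<d. x p = (\<Sum>i\<in>I. \<mu> i * v i p)"
    using assms(3) by (auto simp: in_span_def)
  have "(\<Sum>l\<in>h ` I. \<mu> (inv_into I h l) * a l p) = (\<Sum>i\<in>I. \<mu> (inv_into I h (h i)) * a (h i) p)" for p
    by (simp add: sum.reindex[OF assms(1)])
  also have "\<dots> p = (\<Sum>i\<in>I. \<mu> i * v i p)" for p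
    using assms(1,2) by (intro sum.cong) simp_all
  finally show ?thesis
    using \<mu> unfolding in_span_def by (intro exI[of _ "\<lambda>l. \<mu> (inv_into I h l)"]) simp
qed

lemma in_span_if_kets:
  assumes "\<And>r. r < d \<Longrightarrow> in_span d I a (ket r)"
  shows "in_span d I a x"
proof -
  obtain \<mu> where \<mu>: "\<forall>r<d. \<forall>p<d. ket r p = (\<Sum>i\<in>I. \<mu> r i * a i p)"
    using assms unfolding in_span_def by metis
  have "x p = (\<Sum>i\<in>I. (\<Sum>r<d. x r * \<mu> r i) * a i p)" if "p < d" for p
  proof -
    have "x r * ket r p = (if r = p then x p else 0)" for r
      by (simp add: ket_def)
    then have "x p = (\<Sum>r<d. x r * ket r p)"
      using that by simp
    also have "\<dots> = (\<Sum>r<d. x r * (\<Sum>i\<in>I. \<mu> r i * a i p))"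
      using \<mu> that by simp
    also have "\<dots> = (\<Sum>r<d. \<Sum>i\<in>I. x r * \<mu> r i * a i p)"
      by (simp add: sum_distrib_left mult.assoc)
    also have "\<dots> = (\<Sum>i\<in>I. (\<Sum>r<d. x r * \<mu> r i) * a i p)"
      by (subst sum.swap) (simp add: sum_distrib_right)
    finally show ?thesis .
  qed
  then show ?thesis unfolding in_span_def by (intro exI[of _ "\<lambda>i. \<Sum>r<d. x r * \<mu> r i"]) blast
qed

lemma psd_detects_nonorthogonal:
  assumes Q: "psd d Q" and C: "finite C" "hub \<in> C"
    and seen: "sesq_form d Q (a hub) (a hub) \<noteq> 0"
    and unseen: "\<forall>l\<in>C - {hub}. sesq_form d Q (a l) (a l) = 0"
    and orth: "\<forall>l\<in>C - {hub}. cinner d (a hub) (a l) = 0"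
    and span: "in_span d C a x"
    and x: "cinner d (a hub) x \<noteq> 0"
  shows "sesq_form d Q x x \<noteq> 0"
proof
  assume unseen_x: "sesq_form d Q x x = 0"
  obtain \<mu> where \<mu>: "\<forall>p<d. x p = (\<Sum>l\<in>C. \<mu> l * a l p)"
    using span by (auto simp: in_span_def)
  have "cinner d (a hub) x = (\<Sum>p<d. cnj (a hub p) * (\<Sum>l\<in>C. \<mu> l * a l p))"
    unfolding cinner_def using \<mu> by simp
  also have "\<dots> = (\<Sum>l\<in>C. \<mu> l * cinner d (a hub) (a l))"
    unfolding cinner_def by (simp add: sum_distrib_left sum.swap[of _ C] mult.left_commute)
  also have "\<dots> = \<mu> hub * cinner d (a hub) (a hub)"
    using orth C by (subst sum.remove[of C hub]) auto
  finally have "\<mu> hub \<noteq> 0" using x by auto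
  have "(\<Sum>j<d. Q i j * a hub j) = 0" if i: "i < d" for i
  proof -
    have killed: "(\<Sum>j<d. Q i j * a l j) = 0" if "l \<in> C - {hub}" for l
      using psd_sesq_form_eq_0[OF Q, of "a l" "ket i"] unseen that sesq_form_ket_left[OF i] by auto
    have "(\<Sum>j<d. Q i j * x j) = (\<Sum>j<d. Q i j * (\<Sum>l\<in>C. \<mu> l * a l j))"
      using \<mu> by simp
    also have "\<dots> = (\<Sum>l\<in>C. \<mu> l * (\<Sum>j<d. Q i j * a l j))"
      by (simp add: sum_distrib_left sum.swap[of _ C] mult.left_commute)
    also have "\<dots> = \<mu> hub * (\<Sum>j<d. Q i j * a hub j)"
      using killed C by (subst sum.remove[of C hub]) auto
    finally show ?thesis
      using psd_sesq_form_eq_0[OF Q unseen_x, of "ket i"] sesq_form_ket_left[OF i] \<open>\<mu> hub \<noteq> 0\<close> by auto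
  qed
  then have "sesq_form d Q (a hub) (a hub) = 0"
    unfolding sesq_form_def by (simp add: mult.assoc flip: sum_distrib_left)
  with seen show False by simp
qed

lemma detected_states_orthogonal:
  assumes S: "finite S"
    and R: "\<forall>k\<in>S. psd dB (R k)" "is_identity dB (\<lambda>i j. \<Sum>k\<in>S. R k i j)"
    and discriminates: "\<forall>k\<in>S. \<forall>l\<in>S. k \<noteq> l \<longrightarrow> expect_tensor dA dB Q (R k) (prod_state (a l) (b l)) = 0"
    and l: "l \<in> S" "l' \<in> S" "l \<noteq> l'"
    and detected: "sesq_form dA Q (a l) (a l) \<noteq> 0" "sesq_form dA Q (a l') (a l') \<noteq> 0"
  shows "cinner dB (b l) (b l') = 0"
proof -
  have missed: "sesq_form dB (R k) (b x) (b x) = 0"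
    if "k \<in> S" "x \<in> S" "k \<noteq> x" "sesq_form dA Q (a x) (a x) \<noteq> 0" for k x
    using discriminates that by (fastforce simp: expect_tensor_prod_state)
  have "sesq_form dB (R k) (b l) (b l') = 0" if k: "k \<in> S" for k
  proof (cases "k = l")
    case True
    then have "sesq_form dB (R k) (b l') (b l') = 0" using missed[OF k l(2) _ detected(2)] l by auto
    then show ?thesis using psd_sesq_form_eq_0 R(1) k by blast
  next
    case False
    then have "sesq_form dB (R k) (b l) (b l) = 0" using missed[OF k l(1) _ detected(1)] by auto
    then show ?thesis using psd_sesq_form_eq_0 R(1) k by blast
  qed
  then have "(\<Sum>k\<in>S. sesq_form dB (R k) (b l) (b l')) = 0"
    by (rule sum.neutral[OF ballI])
  then show ?thesis using sum_sesq_form_identity[OF R(2)] by metis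
qed

lemma not_discriminating_after_detecting_outcome:
  fixes a b :: "'i \<Rightarrow> nat \<Rightarrow> complex"
  assumes S: "finite S" "C \<subseteq> S" "hub \<in> C"
    and adjacent_B: "\<forall>l\<in>C - {hub}. cinner dB (b hub) (b l) \<noteq> 0"
    and orth_A: "\<forall>l\<in>C - {hub}. cinner dA (a hub) (a l) = 0"
    and span: "\<forall>r<dA. in_span dA C a (ket r)"
    and pq: "p \<in> S" "q \<in> S" "p \<noteq> q"
    and adjacent_A: "cinner dA (a hub) (a p) \<noteq> 0" "cinner dA (a hub) (a q) \<noteq> 0"
    and pq_B: "cinner dB (b p) (b q) \<noteq> 0"
    and Q: "psd dA Q" "sesq_form dA Q (a hub) (a hub) \<noteq> 0"
    and R: "\<forall>k\<in>S. psd dB (R k)" "is_identity dB (\<lambda>i j. \<Sum>k\<in>S. R k i j)"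
  shows "\<not> (\<forall>k\<in>S. \<forall>l\<in>S. k \<noteq> l \<longrightarrow> expect_tensor dA dB Q (R k) (prod_state (a l) (b l)) = 0)"
proof
  assume "\<forall>k\<in>S. \<forall>l\<in>S. k \<noteq> l \<longrightarrow> expect_tensor dA dB Q (R k) (prod_state (a l) (b l)) = 0"
  note Bob_orthogonal = detected_states_orthogonal[OF S(1) R this]
  have unseen: "\<forall>l\<in>C - {hub}. sesq_form dA Q (a l) (a l) = 0"
  proof (rule ballI, rule ccontr)
    fix l
    assume l: "l \<in> C - {hub}" and "sesq_form dA Q (a l) (a l) \<noteq> 0"
    have "hub \<in> S" "l \<in> S" "hub \<noteq> l" using S l by auto
    then have "cinner dB (b hub) (b l) = 0"
      by (rule Bob_orthogonal[OF _ _ _ Q(2) \<open>sesq_form dA Q (a l) (a l) \<noteq> 0\<close>])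
    with l adjacent_B show False by blast
  qed
  have "finite C" using S finite_subset by blast
  have "in_span dA C a v" for v
    by (rule in_span_if_kets) (use span in blast)
  note detected = psd_detects_nonorthogonal[OF Q(1) \<open>finite C\<close> S(3) Q(2) unseen orth_A this]
  have "cinner dB (b p) (b q) = 0"
    by (rule Bob_orthogonal[OF pq detected[OF adjacent_A(1)] detected[OF adjacent_A(2)]])
  with pq_B show False by contradiction
qed

lemma not_one_way_LOCC_Alice_first_criterion:
  fixes a b :: "'i \<Rightarrow> nat \<Rightarrow> complex"
  assumes S: "finite S" "C \<subseteq> S" "hub \<in> C"
    and adjacent_B: "\<forall>l\<in>C - {hub}. cinner dB (b hub) (b l) \<noteq> 0"
    and orth_A: "\<forall>l\<in>C - {hub}. cinner dA (a hub) (a l) = 0"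
    and span: "\<forall>r<dA. in_span dA C a (ket r)"
    and self: "cinner dA (a hub) (a hub) \<noteq> 0"
    and pq: "p \<in> S" "q \<in> S" "p \<noteq> q"
    and adjacent_A: "cinner dA (a hub) (a p) \<noteq> 0" "cinner dA (a hub) (a q) \<noteq> 0"
    and pq_B: "cinner dB (b p) (b q) \<noteq> 0"
  shows "\<not> one_way_LOCC_Alice_first dA dB S (\<lambda>l. prod_state (a l) (b l))"
proof
  assume "one_way_LOCC_Alice_first dA dB S (\<lambda>l. prod_state (a l) (b l))"
  then obtain N :: nat and Q :: "nat \<Rightarrow> nat \<Rightarrow> nat \<Rightarrow> complex"
      and R :: "nat \<Rightarrow> 'i \<Rightarrow> nat \<Rightarrow> nat \<Rightarrow> complex"
    where Q: "\<forall>t<N. psd dA (Q t)" "is_identity dA (\<lambda>i j. \<Sum>t<N. Q t i j)"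
      and R: "\<forall>t<N. (\<forall>k\<in>S. psd dB (R t k)) \<and> is_identity dB (\<lambda>i j. \<Sum>k\<in>S. R t k i j)"
      and discriminates: "\<forall>t<N. \<forall>k\<in>S. \<forall>l\<in>S. k \<noteq> l \<longrightarrow>
             expect_tensor dA dB (Q t) (R t k) (prod_state (a l) (b l)) = 0"
    unfolding one_way_LOCC_Alice_first_def by (elim exE conjE) (rule that; assumption)
  have "\<exists>t<N. sesq_form dA (Q t) (a hub) (a hub) \<noteq> 0"
  proof (rule ccontr)
    assume "\<not> ?thesis"
    then have "(\<Sum>t<N. sesq_form dA (Q t) (a hub) (a hub)) = 0"
      by (intro sum.neutral) auto
    with sum_sesq_form_identity[OF Q(2)] self show False by simp
  qed
  then obtain t where t: "t < N" "sesq_form dA (Q t) (a hub) (a hub) \<noteq> 0"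
    by blast
  have "psd dA (Q t)" "\<forall>k\<in>S. psd dB (R t k)" "is_identity dB (\<lambda>i j. \<Sum>k\<in>S. R t k i j)"
    using Q(1) R t(1) by auto
  from not_discriminating_after_detecting_outcome[OF S adjacent_B orth_A span pq adjacent_A pq_B
      this(1) t(2) this(2,3)] discriminates t(1)
  show False by blast
qed

lemma one_way_LOCC_Bob_first_swap:
  assumes "one_way_LOCC_Bob_first dA dB S (\<lambda>l. prod_state (a l) (b l))"
  shows "one_way_LOCC_Alice_first dB dA S (\<lambda>l. prod_state (b l) (a l))"
proof -
  have "expect_tensor dB dA Q R (prod_state (b l) (a l)) = expect_tensor dA dB R Q (prod_state (a l) (b l))"
    for Q R l by (simp add: expect_tensor_prod_state mult.commute)
  then show ?thesis
    using assms unfolding one_way_LOCC_Alice_first_def one_way_LOCC_Bob_first_def by simp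
qed

lemma one_way_LOCC_Alice_first_reindex:
  fixes h :: "'j \<Rightarrow> 'i"
  assumes h: "bij_betw h T S" and "one_way_LOCC_Alice_first dA dB S \<psi>"
  shows "one_way_LOCC_Alice_first dA dB T (\<lambda>l. \<psi> (h l))"
proof -
  obtain N :: nat and Q :: "nat \<Rightarrow> nat \<Rightarrow> nat \<Rightarrow> complex"
      and R :: "nat \<Rightarrow> 'i \<Rightarrow> nat \<Rightarrow> nat \<Rightarrow> complex"
    where Q: "\<forall>t<N. psd dA (Q t)" "is_identity dA (\<lambda>i j. \<Sum>t<N. Q t i j)"
      and R: "\<forall>t<N. (\<forall>k\<in>S. psd dB (R t k)) \<and> is_identity dB (\<lambda>i j. \<Sum>k\<in>S. R t k i j)"
      and discriminates: "\<forall>t<N. \<forall>k\<in>S. \<forall>l\<in>S. k \<noteq> l \<longrightarrow> expect_tensor dA dB (Q t) (R t k) (\<psi> l) = 0"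
    using assms(2) unfolding one_way_LOCC_Alice_first_def by (elim exE conjE) (rule that; assumption)
  have "(\<Sum>k\<in>T. R t (h k) i j) = (\<Sum>k\<in>S. R t k i j)" for t i j
    using sum.reindex_bij_betw[OF h] .
  moreover have "h k \<noteq> h l" if "k \<in> T" "l \<in> T" "k \<noteq> l" for k l
    using h that by (metis bij_betw_inv_into_left)
  ultimately show ?thesis
    using Q R discriminates bij_betw_apply[OF h] unfolding one_way_LOCC_Alice_first_def
    by (intro exI[of _ N] exI[of _ Q] exI[of _ "\<lambda>t k. R t (h k)"]) simp
qed

lemma doubleton_mem_ortho_graph_iff:
  assumes "u \<in> S" "w \<in> S" "u \<noteq> w"
  shows "{u, w} \<in> ortho_graph d S v \<longleftrightarrow> cinner d (v u) (v w) \<noteq> 0"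
proof
  assume "{u, w} \<in> ortho_graph d S v"
  then obtain u' w' where "{u, w} = {u', w'}" "cinner d (v u') (v w') \<noteq> 0"
    unfolding ortho_graph_def by blast
  then show "cinner d (v u) (v w) \<noteq> 0"
    by (metis cinner_commute complex_cnj_zero_iff doubleton_eq_iff)
qed (use assms in \<open>auto simp: ortho_graph_def\<close>)

lemma ortho_graph_eq_complement_iff:
  assumes "ortho_graph dA S a = complement_graph S (ortho_graph dB S b)"
    and "u \<in> S" "w \<in> S" "u \<noteq> w"
  shows "cinner dA (a u) (a w) \<noteq> 0 \<longleftrightarrow> cinner dB (b u) (b w) = 0"
proof -
  have "{u, w} \<in> complement_graph S (ortho_graph dB S b) \<longleftrightarrow> {u, w} \<notin> ortho_graph dB S b"
    using assms(2-4) unfolding complement_graph_def by blast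
  then show ?thesis
    using assms doubleton_mem_ortho_graph_iff[OF assms(2-4)] by metis
qed

text \<open>The factor that \<open>alice_vec\<close> (\<open>bob_vec\<close>) assigns to the \<open>j\<close>-th square of a vertical
  (horizontal) domino of length \<open>s\<close> occupying positions \<open>b + 1, \<dots>, b + s\<close> mod \<open>M\<close>, with
  constant \<open>g = \<beta> c\<close> (\<open>g = \<alpha> r\<close>).\<close>

definition fourier_vec :: "nat \<Rightarrow> nat \<Rightarrow> nat \<Rightarrow> complex \<Rightarrow> nat \<Rightarrow> nat \<Rightarrow> complex" where
  "fourier_vec M b s g j =
     (\<lambda>p. \<Sum>k\<in>{1..s}. if p = (b + k) mod M then g ^ k * root_unity s ^ (j * k) else 0)"

lemma inj_on_add_mod:
  fixes b s M :: nat
  assumes "s \<le> M"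
  shows "inj_on (\<lambda>j. (b + j) mod M) {1..s}"
proof (rule inj_onI, rule ccontr)
  fix j j' :: nat
  assume j: "j \<in> {1..s}" "j' \<in> {1..s}" and "(b + j) mod M = (b + j') mod M" and "j \<noteq> j'"
  then have "int (b + j) mod int M = int (b + j') mod int M"
    by (metis of_nat_mod)
  then have "int M dvd int j - int j'"
    by (simp add: mod_eq_dvd_iff)
  then have "int M \<le> \<bar>int j - int j'\<bar>"
    using \<open>j \<noteq> j'\<close> dvd_imp_le_int by (metis abs_of_nat eq_iff_diff_eq_0 of_nat_eq_iff)
  moreover have "\<bar>int j - int j'\<bar> < int M"
    using j assms by auto
  ultimately show False by simp
qed

lemma root_unity_pow_eq_1_iff:
  assumes "s \<ge> 1"
  shows "root_unity s ^ d = 1 \<longleftrightarrow> s dvd d"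
proof -
  have "root_unity s ^ d = exp (of_nat d * (2 * of_real pi * \<i> / of_nat s))"
    unfolding root_unity_def by (rule exp_of_nat_mult[symmetric])
  also have "\<dots> = exp (2 * complex_of_real pi * \<i> * complex_of_nat d / complex_of_nat s)"
    by (simp add: algebra_simps)
  finally show ?thesis using complex_root_unity_eq_1[OF assms] by simp
qed

lemma sum_root_unity_pow:
  assumes "s \<ge> 1"
  shows "(\<Sum>j\<in>{1..s}. root_unity s ^ (j * d)) = (if s dvd d then of_nat s else 0)"
proof -
  define x where "x = root_unity s ^ d"
  have pow: "root_unity s ^ (j * d) = x ^ j" for j
    unfolding x_def by (simp add: power_mult[symmetric] mult.commute)
  have "(\<Sum>j\<in>{1..s}. x ^ j) = (\<Sum>j<s. x ^ Suc j)"
    using sum.atLeast1_atMost_eq[of "\<lambda>j. x ^ j" s] by simp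
  also have "\<dots> = x * (\<Sum>j<s. x ^ j)" by (simp add: sum_distrib_left)
  finally have sum_eq: "(\<Sum>j\<in>{1..s}. x ^ j) = x * (\<Sum>j<s. x ^ j)" .
  show ?thesis
  proof (cases "s dvd d")
    case True
    then have "x = 1" unfolding x_def using root_unity_pow_eq_1_iff[OF assms] by simp
    then show ?thesis using True pow by simp
  next
    case False
    then have "x \<noteq> 1" unfolding x_def using root_unity_pow_eq_1_iff[OF assms] by simp
    moreover have "x ^ s = 1" unfolding x_def
      by (metis power_mult[symmetric] mult.commute root_unity_pow_eq_1_iff[OF assms] dvd_refl power_mult power_one)
    ultimately have "(\<Sum>j<s. x ^ j) = 0" by (simp add: geometric_sum)
    then show ?thesis using False pow sum_eq by simp
  qed
qed

lemma dvd_add_diff_iff_eq: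
  fixes k k' s :: nat
  assumes "k \<in> {1..s}" "k' \<in> {1..s}"
  shows "s dvd k' + (s - k) \<longleftrightarrow> k' = k"
proof
  assume "s dvd k' + (s - k)"
  then obtain q where q: "k' + (s - k) = s * q" by (elim dvdE)
  have "0 < k' + (s - k)" "k' + (s - k) < s * 2" using assms by auto
  with q have "q \<noteq> 0" "q < 2" by auto
  then have "q = 1" by arith
  then show "k' = k" using assms q by auto
qed (use assms in auto)

lemma fourier_vec_at:
  assumes "k \<in> {1..s}" "s \<le> M"
  shows "fourier_vec M b s g j ((b + k) mod M) = g ^ k * root_unity s ^ (j * k)"
proof -
  have "(b + k) mod M = (b + k') mod M \<longleftrightarrow> k' = k" if "k' \<in> {1..s}" for k'
    using inj_on_add_mod[OF assms(2), of b] assms(1) that unfolding inj_on_def by blast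
  then have "fourier_vec M b s g j ((b + k) mod M) =
      (\<Sum>k'\<in>{1..s}. if k' = k then g ^ k' * root_unity s ^ (j * k') else 0)"
    unfolding fourier_vec_def by (intro sum.cong) auto
  with assms(1) show ?thesis by simp
qed

lemma fourier_vec_at_neq_0:
  assumes "k \<in> {1..s}" "s \<le> M" "g \<noteq> 0"
  shows "fourier_vec M b s g j ((b + k) mod M) \<noteq> 0"
  using fourier_vec_at[OF assms(1,2)] assms(3) by (simp add: root_unity_def)

text \<open>The coefficient \<open>root_unity s ^ (j * (s - k))\<close> is \<open>\<omega>\<^sup>-\<^sup>j\<^sup>k\<close>, written with a natural
  exponent.\<close>

lemma fourier_inversion:
  assumes k: "k \<in> {1..s}" and "g \<noteq> 0"
  shows "(\<Sum>j\<in>{1..s}. root_unity s ^ (j * (s - k)) / (of_nat s * g ^ k) * fourier_vec M b s g j p)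
           = ket ((b + k) mod M) p"
proof -
  have s: "s \<ge> 1" using k by simp
  have "root_unity s ^ (j * (s - k)) / (of_nat s * g ^ k) * fourier_vec M b s g j p =
      (\<Sum>k'\<in>{1..s}. if p = (b + k') mod M
         then g ^ k' * root_unity s ^ (j * (k' + (s - k))) / (of_nat s * g ^ k) else 0)" for j
    unfolding fourier_vec_def sum_distrib_left
    by (intro sum.cong) (auto simp: distrib_left power_add)
  then have "(\<Sum>j\<in>{1..s}. root_unity s ^ (j * (s - k)) / (of_nat s * g ^ k) * fourier_vec M b s g j p)
      = (\<Sum>j\<in>{1..s}. \<Sum>k'\<in>{1..s}. if p = (b + k') mod M
          then g ^ k' * root_unity s ^ (j * (k' + (s - k))) / (of_nat s * g ^ k) else 0)"
    by (rule sum.cong[OF refl])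
  also have "\<dots> = (\<Sum>k'\<in>{1..s}. \<Sum>j\<in>{1..s}. if p = (b + k') mod M
          then g ^ k' * root_unity s ^ (j * (k' + (s - k))) / (of_nat s * g ^ k) else 0)"
    by (rule sum.swap)
  also have "\<dots> = (\<Sum>k'\<in>{1..s}. if p = (b + k') mod M
          then g ^ k' * (\<Sum>j\<in>{1..s}. root_unity s ^ (j * (k' + (s - k)))) / (of_nat s * g ^ k) else 0)"
    by (intro sum.cong refl) (simp add: sum_distrib_left sum_divide_distrib)
  also have "\<dots> = (\<Sum>k'\<in>{1..s}. if k' = k then (if p = (b + k) mod M then 1 else 0) else 0)"
  proof (intro sum.cong refl)
    fix k' assume k': "k' \<in> {1..s}"
    have "(\<Sum>j\<in>{1..s}. root_unity s ^ (j * (k' + (s - k)))) = (if k' = k then of_nat s else 0)"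
      using sum_root_unity_pow[OF s] dvd_add_diff_iff_eq[OF k k'] by simp
    then show "(if p = (b + k') mod M
          then g ^ k' * (\<Sum>j\<in>{1..s}. root_unity s ^ (j * (k' + (s - k)))) / (of_nat s * g ^ k) else 0)
        = (if k' = k then (if p = (b + k) mod M then 1 else 0) else 0)"
      using assms(2) s by auto
  qed
  also have "\<dots> = ket ((b + k) mod M) p"
    using k unfolding ket_def by (subst sum.delta) auto
  finally show ?thesis .
qed

lemma in_span_fourier_vec:
  assumes "k \<in> {1..s}" "g \<noteq> 0"
  shows "in_span M {1..s} (fourier_vec M b s g) (ket ((b + k) mod M))"
proof -
  have "\<forall>p<M. ket ((b + k) mod M) p =
      (\<Sum>j\<in>{1..s}. root_unity s ^ (j * (s - k)) / (of_nat s * g ^ k) * fourier_vec M b s g j p)"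
    using fourier_inversion[OF assms] by presburger
  then show ?thesis
    unfolding in_span_def by (rule exI[of _ "\<lambda>j. root_unity s ^ (j * (s - k)) / (of_nat s * g ^ k)"])
qed

lemma valid_domino_squares_subset_board:
  "valid_domino m n d \<Longrightarrow> dom_squares m n d \<subseteq> board m n"
  by (cases d) (auto simp: board_def)

lemma dom_of_eq:
  assumes D: "domino_diagram m n D" and d: "d \<in> D" "sq \<in> dom_squares m n d"
  shows "dom_of m n D sq = d"
proof -
  have "valid_domino m n d" using D d(1) unfolding domino_diagram_def by blast
  then have "sq \<in> board m n" using d(2) valid_domino_squares_subset_board by blast
  then have "\<exists>!d. d \<in> D \<and> sq \<in> dom_squares m n d"
    using D unfolding domino_diagram_def by blast
  then show ?thesis unfolding dom_of_def using d by (simp add: the1_equality)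
qed

lemma square_in_domino:
  assumes D: "domino_diagram m n D" and "r < m" "c < n"
  obtains (Ver) b s j where "Ver c b s \<in> D" "j \<in> {1..s}" "s \<le> m" "r = (b + j) mod m"
    | (Hor) b s j where "Hor r b s \<in> D" "j \<in> {1..s}" "s \<le> n" "c = (b + j) mod n"
proof -
  obtain d where d: "d \<in> D" "(r, c) \<in> dom_squares m n d"
    using D assms(2,3) unfolding domino_diagram_def board_def by blast
  have valid: "valid_domino m n d" using D d(1) unfolding domino_diagram_def by blast
  show ?thesis
  proof (cases d)
    case (Hor r' b s)
    with d(2) valid obtain j where "r' = r" "j \<in> {1..s}" "s \<le> n" "c = (b + j) mod n" by auto
    with d(1) Hor show ?thesis by (intro that(2)) auto
  next
    case (Ver c' b s)
    with d(2) valid obtain j where "c' = c" "j \<in> {1..s}" "s \<le> m" "r = (b + j) mod m" by auto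
    with d(1) Ver show ?thesis by (intro that(1)) auto
  qed
qed

lemma dom_pos_Ver:
  assumes "j \<in> {1..s}" "s \<le> m"
  shows "dom_pos m n (Ver c b s) ((b + j) mod m, c') = j"
proof -
  have "j' = j" if "j' \<in> {1..s}" "(b + j') mod m = (b + j) mod m" for j'
    using inj_onD[OF inj_on_add_mod[OF assms(2)] that(2) that(1) assms(1)] .
  then show ?thesis using assms(1) by (auto intro: the_equality)
qed

lemma dom_pos_Hor:
  assumes "j \<in> {1..s}" "s \<le> n"
  shows "dom_pos m n (Hor r b s) (r', (b + j) mod n) = j"
proof -
  have "j' = j" if "j' \<in> {1..s}" "(b + j') mod n = (b + j) mod n" for j'
    using inj_onD[OF inj_on_add_mod[OF assms(2)] that(2) that(1) assms(1)] .
  then show ?thesis using assms(1) by (auto intro: the_equality)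
qed

lemma domino_vecs_Ver:
  assumes D: "domino_diagram m n D" and d: "Ver c b s \<in> D" and j: "j \<in> {1..s}"
  shows "alice_vec m n D \<alpha> \<beta> ((b + j) mod m, c) = fourier_vec m b s (\<beta> c) j"
    and "bob_vec m n D \<alpha> \<beta> ((b + j) mod m, c) = ket c"
proof -
  have "s \<le> m" using D d unfolding domino_diagram_def by fastforce
  have dom: "dom_of m n D ((b + j) mod m, c) = Ver c b s"
    using dom_of_eq[OF D d] j by auto
  note pos = dom_pos_Ver[OF j \<open>s \<le> m\<close>, of n c b c]
  show "alice_vec m n D \<alpha> \<beta> ((b + j) mod m, c) = fourier_vec m b s (\<beta> c) j"
    and "bob_vec m n D \<alpha> \<beta> ((b + j) mod m, c) = ket c"
    unfolding alice_vec_def bob_vec_def Let_def dom pos by (simp_all add: fourier_vec_def)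
qed

lemma domino_vecs_Hor:
  assumes D: "domino_diagram m n D" and d: "Hor r b s \<in> D" and j: "j \<in> {1..s}"
  shows "alice_vec m n D \<alpha> \<beta> (r, (b + j) mod n) = ket r"
    and "bob_vec m n D \<alpha> \<beta> (r, (b + j) mod n) = fourier_vec n b s (\<alpha> r) j"
proof -
  have "s \<le> n" using D d unfolding domino_diagram_def by fastforce
  have dom: "dom_of m n D (r, (b + j) mod n) = Hor r b s"
    using dom_of_eq[OF D d] j by auto
  note pos = dom_pos_Hor[OF j \<open>s \<le> n\<close>, of m r b r]
  show "alice_vec m n D \<alpha> \<beta> (r, (b + j) mod n) = ket r"
    and "bob_vec m n D \<alpha> \<beta> (r, (b + j) mod n) = fourier_vec n b s (\<alpha> r) j"
    unfolding alice_vec_def bob_vec_def Let_def dom pos by (simp_all add: fourier_vec_def)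
qed

lemma domino_vecs_local:
  assumes D: "domino_diagram m n D" and \<alpha>: "\<forall>r<m. \<alpha> r \<noteq> 0" and \<beta>: "\<forall>c<n. \<beta> c \<noteq> 0"
    and rc: "r < m" "c < n"
  shows "alice_vec m n D \<alpha> \<beta> (r, c) r \<noteq> 0 \<and> bob_vec m n D \<alpha> \<beta> (r, c) c \<noteq> 0
     \<and> (alice_vec m n D \<alpha> \<beta> (r, c) = ket r \<or> bob_vec m n D \<alpha> \<beta> (r, c) = ket c)"
  using D rc
proof (cases rule: square_in_domino)
  case (Ver b s j)
  then show ?thesis
    using domino_vecs_Ver[OF D Ver(1,2)] fourier_vec_at_neq_0[OF Ver(2,3)] \<beta> rc
    by (simp add: ket_def)
next
  case (Hor b s j)
  then show ?thesis
    using domino_vecs_Hor[OF D Hor(1,2)] fourier_vec_at_neq_0[OF Hor(2,3)] \<alpha> rc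
    by (simp add: ket_def)
qed

lemma alice_vec_column_span:
  assumes D: "domino_diagram m n D" and \<beta>: "\<forall>c<n. \<beta> c \<noteq> 0" and rc: "r < m" "c < n"
  shows "in_span m {..<m} (\<lambda>r'. alice_vec m n D \<alpha> \<beta> (r', c)) (ket r)"
  using D rc
proof (cases rule: square_in_domino)
  case (Ver b s j)
  have "in_span m ((\<lambda>j. (b + j) mod m) ` {1..s}) (\<lambda>r'. alice_vec m n D \<alpha> \<beta> (r', c)) (ket r)"
    using inj_on_add_mod[OF Ver(3)] domino_vecs_Ver(1)[OF D Ver(1)] in_span_fourier_vec[OF Ver(2)] \<beta> rc Ver(4)
    by (intro in_span_image) auto
  then show ?thesis by (rule in_span_mono[rotated 2]) (use rc in auto)
next
  case (Hor b s j)
  then show ?thesis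
    using domino_vecs_Hor(1)[OF D Hor(1,2)] rc by (intro in_span_member) auto
qed

lemma bob_vec_row_span:
  assumes D: "domino_diagram m n D" and \<alpha>: "\<forall>r<m. \<alpha> r \<noteq> 0" and rc: "r < m" "c < n"
  shows "in_span n {..<n} (\<lambda>c'. bob_vec m n D \<alpha> \<beta> (r, c')) (ket c)"
  using D rc
proof (cases rule: square_in_domino)
  case (Ver b s j)
  then show ?thesis
    using domino_vecs_Ver(2)[OF D Ver(1,2)] rc by (intro in_span_member) auto
next
  case (Hor b s j)
  have "in_span n ((\<lambda>j. (b + j) mod n) ` {1..s}) (\<lambda>c'. bob_vec m n D \<alpha> \<beta> (r, c')) (ket c)"
    using inj_on_add_mod[OF Hor(3)] domino_vecs_Hor(2)[OF D Hor(1)] in_span_fourier_vec[OF Hor(2)] \<alpha> rc Hor(4)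
    by (intro in_span_image) auto
  then show ?thesis by (rule in_span_mono[rotated 2]) (use rc in auto)
qed

lemma not_one_way_LOCC_Alice_first_grid:
  fixes A B :: "nat \<times> nat \<Rightarrow> nat \<Rightarrow> complex"
  assumes graphs: "\<And>u w. u \<in> board m n \<Longrightarrow> w \<in> board m n \<Longrightarrow> u \<noteq> w \<Longrightarrow>
        cinner m (A u) (A w) \<noteq> 0 \<longleftrightarrow> cinner n (B u) (B w) = 0"
    and local: "\<And>r c. r < m \<Longrightarrow> c < n \<Longrightarrow>
        A (r, c) r \<noteq> 0 \<and> B (r, c) c \<noteq> 0 \<and> (A (r, c) = ket r \<or> B (r, c) = ket c)"
    and span: "\<And>r. r < m \<Longrightarrow> in_span m {..<m} (\<lambda>r'. A (r', c)) (ket r)"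
    and n: "n \<ge> 2" and c: "c < n" and hub_row: "hub_row < m" and B_hub: "B (hub_row, c) = ket c"
    and rows: "row_p < m" "row_q < m" "row_p \<noteq> row_q"
      "A (hub_row, c) row_p \<noteq> 0" "A (hub_row, c) row_q \<noteq> 0"
  shows "\<not> one_way_LOCC_Alice_first m n (board m n) (\<lambda>l. prod_state (A l) (B l))"
proof -
  define column where "column = (\<lambda>r. (r, c)) ` {..<m}"
  define c' where "c' = (c + 1) mod n"
  have c': "c' < n" "c' \<noteq> c"
    using n c unfolding c'_def by (auto simp: mod_if)
  have column: "column \<subseteq> board m n" "(hub_row, c) \<in> column"
    using c hub_row unfolding column_def board_def by auto
  have adjacent_B: "\<forall>l\<in>column - {(hub_row, c)}. cinner n (B (hub_row, c)) (B l) \<noteq> 0"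
    using local c unfolding column_def B_hub by (auto simp: cinner_ket_left)
  have orth_A: "\<forall>l\<in>column - {(hub_row, c)}. cinner m (A (hub_row, c)) (A l) = 0"
    using graphs adjacent_B column by blast
  have "\<forall>r<m. in_span m column A (ket r)"
    unfolding column_def using span by (auto intro: in_span_image inj_onI)
  have A_adjacent: "cinner m (A (hub_row, c)) (A (r, c')) \<noteq> 0" if "r < m" "A (hub_row, c) r \<noteq> 0" for r
  proof (cases "A (r, c') = ket r")
    case True
    with that show ?thesis by (simp add: cinner_ket_right)
  next
    case False
    then have "B (r, c') = ket c'" using local that c' by blast
    then have "cinner n (B (hub_row, c)) (B (r, c')) = 0"
      using c' by (simp only: B_hub cinner_ket_left[OF c]) (simp add: ket_def)
    then show ?thesis
      using graphs[of "(hub_row, c)" "(r, c')"] that hub_row c c' by (auto simp: board_def)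
  qed
  have B_adjacent: "cinner n (B (row_p, c')) (B (row_q, c')) \<noteq> 0"
  proof (cases "B (row_p, c') = ket c' \<or> B (row_q, c') = ket c'")
    case True
    then show ?thesis
      using local rows c' by (auto simp: cinner_ket_left cinner_ket_right)
  next
    case False
    then have kets: "A (row_p, c') = ket row_p" "A (row_q, c') = ket row_q" using local rows c' by blast+
    have "cinner m (A (row_p, c')) (A (row_q, c')) = 0"
      using rows by (simp only: kets cinner_ket_left[OF rows(1)]) (simp add: ket_def)
    then show ?thesis
      using graphs[of "(row_p, c')" "(row_q, c')"] rows c' by (auto simp: board_def)
  qed
  show ?thesis
  proof (rule not_one_way_LOCC_Alice_first_criterion[where C = column and hub = "(hub_row, c)"
        and p = "(row_p, c')" and q = "(row_q, c')"])
    show "finite (board m n)" by (simp add: board_def)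
    show "(row_p, c') \<in> board m n" "(row_q, c') \<in> board m n" "(row_p, c') \<noteq> (row_q, c')"
      using rows c' by (auto simp: board_def)
    show "cinner m (A (hub_row, c)) (A (hub_row, c)) \<noteq> 0"
      using rows(1,4) by (rule cinner_self_neq_0)
  qed (use column adjacent_B orth_A \<open>\<forall>r<m. in_span m column A (ket r)\<close>
         A_adjacent rows B_adjacent in auto)
qed

lemma Ver_domino_not_one_way_LOCC_Alice_first:
  assumes n: "n \<ge> 2" and D: "domino_diagram m n D"
    and \<alpha>: "\<forall>r<m. \<alpha> r \<noteq> 0" and \<beta>: "\<forall>c<n. \<beta> c \<noteq> 0"
    and graphs: "ortho_graph m (board m n) (alice_vec m n D \<alpha> \<beta>)
           = complement_graph (board m n) (ortho_graph n (board m n) (bob_vec m n D \<alpha> \<beta>))"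
    and d: "Ver c b s \<in> D" "s \<ge> 2"
  shows "\<not> one_way_LOCC_Alice_first m n (board m n)
           (\<lambda>sq. prod_state (alice_vec m n D \<alpha> \<beta> sq) (bob_vec m n D \<alpha> \<beta> sq))"
proof -
  have valid: "c < n" "s \<le> m" using D d unfolding domino_diagram_def by fastforce+
  then have "0 < m" using d(2) by linarith
  have j: "1 \<in> {1..s}" "2 \<in> {1..s}" using d by auto
  define r1 r2 where "r1 = (b + 1) mod m" and "r2 = (b + 2) mod m"
  have "r1 \<noteq> r2"
    using inj_onD[OF inj_on_add_mod[OF valid(2)] _ j] unfolding r1_def r2_def by fastforce
  show ?thesis
  proof (rule not_one_way_LOCC_Alice_first_grid[where c = c and hub_row = r1 and row_p = r1 and row_q = r2])
    show "cinner m (alice_vec m n D \<alpha> \<beta> u) (alice_vec m n D \<alpha> \<beta> w) \<noteq> 0 \<longleftrightarrow>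
        cinner n (bob_vec m n D \<alpha> \<beta> u) (bob_vec m n D \<alpha> \<beta> w) = 0"
      if "u \<in> board m n" "w \<in> board m n" "u \<noteq> w" for u w
      using ortho_graph_eq_complement_iff[OF graphs that] .
    show "alice_vec m n D \<alpha> \<beta> (r1, c) r1 \<noteq> 0" "alice_vec m n D \<alpha> \<beta> (r1, c) r2 \<noteq> 0"
      using domino_vecs_Ver(1)[OF D d(1) j(1)] fourier_vec_at_neq_0[OF j(1) valid(2)]
        fourier_vec_at_neq_0[OF j(2) valid(2)] \<beta> valid
      unfolding r1_def r2_def by auto
    show "bob_vec m n D \<alpha> \<beta> (r1, c) = ket c"
      using domino_vecs_Ver(2)[OF D d(1) j(1)] unfolding r1_def .
  qed (use n valid \<open>0 < m\<close> \<open>r1 \<noteq> r2\<close> domino_vecs_local[OF D \<alpha> \<beta>] alice_vec_column_span[OF D \<beta>]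
       in \<open>auto simp: r1_def r2_def\<close>)
qed

lemma Hor_domino_not_one_way_LOCC_Bob_first:
  assumes m: "m \<ge> 2" and D: "domino_diagram m n D"
    and \<alpha>: "\<forall>r<m. \<alpha> r \<noteq> 0" and \<beta>: "\<forall>c<n. \<beta> c \<noteq> 0"
    and graphs: "ortho_graph m (board m n) (alice_vec m n D \<alpha> \<beta>)
           = complement_graph (board m n) (ortho_graph n (board m n) (bob_vec m n D \<alpha> \<beta>))"
    and d: "Hor r b s \<in> D" "s \<ge> 2"
  shows "\<not> one_way_LOCC_Bob_first m n (board m n)
           (\<lambda>sq. prod_state (alice_vec m n D \<alpha> \<beta> sq) (bob_vec m n D \<alpha> \<beta> sq))"
proof
  let ?A = "alice_vec m n D \<alpha> \<beta>" and ?B = "bob_vec m n D \<alpha> \<beta>"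
  assume "one_way_LOCC_Bob_first m n (board m n) (\<lambda>sq. prod_state (?A sq) (?B sq))"
  \<comment> \<open>transposing the board exchanges the roles of Alice and Bob\<close>
  then have "one_way_LOCC_Alice_first n m (board m n) (\<lambda>sq. prod_state (?B sq) (?A sq))"
    by (rule one_way_LOCC_Bob_first_swap)
  moreover have "bij_betw prod.swap (board n m) (board m n)"
    unfolding board_def by (simp add: bij_betw_def product_swap)
  ultimately have "one_way_LOCC_Alice_first n m (board n m)
      (\<lambda>l. prod_state (?B (prod.swap l)) (?A (prod.swap l)))"
    by (rule one_way_LOCC_Alice_first_reindex[rotated])
  moreover
  have valid: "r < m" "s \<le> n" using D d unfolding domino_diagram_def by fastforce+
  then have "0 < n" using d(2) by linarith
  have j: "1 \<in> {1..s}" "2 \<in> {1..s}" using d by auto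
  define c1 c2 where "c1 = (b + 1) mod n" and "c2 = (b + 2) mod n"
  have "c1 \<noteq> c2"
    using inj_onD[OF inj_on_add_mod[OF valid(2)] _ j] unfolding c1_def c2_def by fastforce
  have "\<not> one_way_LOCC_Alice_first n m (board n m)
      (\<lambda>l. prod_state (?B (prod.swap l)) (?A (prod.swap l)))"
  proof (rule not_one_way_LOCC_Alice_first_grid[where c = r and hub_row = c1 and row_p = c1 and row_q = c2])
    show "cinner n (?B (prod.swap u)) (?B (prod.swap w)) \<noteq> 0 \<longleftrightarrow>
        cinner m (?A (prod.swap u)) (?A (prod.swap w)) = 0"
      if "u \<in> board n m" "w \<in> board n m" "u \<noteq> w" for u w
      using ortho_graph_eq_complement_iff[OF graphs, of "prod.swap u" "prod.swap w"] that
      by (auto simp: board_def)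
    show "?B (prod.swap (c1, r)) c1 \<noteq> 0" "?B (prod.swap (c1, r)) c2 \<noteq> 0"
      using domino_vecs_Hor(2)[OF D d(1) j(1)] fourier_vec_at_neq_0[OF j(1) valid(2)]
        fourier_vec_at_neq_0[OF j(2) valid(2)] \<alpha> valid
      unfolding c1_def c2_def by auto
    show "?A (prod.swap (c1, r)) = ket r"
      using domino_vecs_Hor(1)[OF D d(1) j(1)] unfolding c1_def by simp
  qed (use m valid \<open>0 < n\<close> \<open>c1 \<noteq> c2\<close> domino_vecs_local[OF D \<alpha> \<beta>] bob_vec_row_span[OF D \<alpha>]
       in \<open>auto simp: c1_def c2_def\<close>)
  ultimately show False by contradiction
qed

theorem mainTheorem8:
  fixes m n :: nat and D :: "domino set" and \<alpha> \<beta> :: "nat \<Rightarrow> complex"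
  assumes "m \<ge> 2" and "n \<ge> 2"
    and "domino_diagram m n D"
    and "\<forall>r<m. \<alpha> r \<noteq> 0" and "\<forall>c<n. \<beta> c \<noteq> 0"
    and "ortho_graph m (board m n) (alice_vec m n D \<alpha> \<beta>)
           = complement_graph (board m n) (ortho_graph n (board m n) (bob_vec m n D \<alpha> \<beta>))"
  shows "((\<exists>d\<in>D. is_vertical d \<and> dom_len d \<ge> 2) \<longrightarrow>
            \<not> one_way_LOCC_Alice_first m n (board m n)
                 (\<lambda>sq. prod_state (alice_vec m n D \<alpha> \<beta> sq) (bob_vec m n D \<alpha> \<beta> sq)))
       \<and> ((\<exists>d\<in>D. is_horizontal d \<and> dom_len d \<ge> 2) \<longrightarrow>
            \<not> one_way_LOCC_Bob_first m n (board m n)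
                 (\<lambda>sq. prod_state (alice_vec m n D \<alpha> \<beta> sq) (bob_vec m n D \<alpha> \<beta> sq)))"
proof (intro conjI impI)
  assume "\<exists>d\<in>D. is_vertical d \<and> dom_len d \<ge> 2"
  then obtain c b s where "Ver c b s \<in> D" "s \<ge> 2"
    by (metis dom_len.simps(1,2) is_vertical.elims(2))
  with assms(2-6) show "\<not> one_way_LOCC_Alice_first m n (board m n)
      (\<lambda>sq. prod_state (alice_vec m n D \<alpha> \<beta> sq) (bob_vec m n D \<alpha> \<beta> sq))"
    by (rule Ver_domino_not_one_way_LOCC_Alice_first)
next
  assume "\<exists>d\<in>D. is_horizontal d \<and> dom_len d \<ge> 2"
  then obtain r b s where "Hor r b s \<in> D" "s \<ge> 2"
    by (metis dom_len.simps(1,2) is_horizontal.elims(2))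
  with assms(1,3-6) show "\<not> one_way_LOCC_Bob_first m n (board m n)
      (\<lambda>sq. prod_state (alice_vec m n D \<alpha> \<beta> sq) (bob_vec m n D \<alpha> \<beta> sq))"
    by (rule Hor_domino_not_one_way_LOCC_Bob_first)
qed

end
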